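(* Let $q\in\mathbb{C}^{\ast}$ with $|q|=1$, $q$ not a root of unity, and suppose $q$ does not satisfy the Liouville property, i.e. there exist $C,L>0$ such that $|q^n-1|\ge C|n|^{-L}$ for all integers $n\neq0$. Then the Picard group $Pic({\cal B}_q)$ is an extension of $\mathbb{Z}$ by $\mathbb{C}^{\ast}/q^{\mathbb{Z}}$, i.e. there is a short exact sequence of groups $0\to\mathbb{C}^{\ast}/q^{\mathbb{Z}}\to Pic({\cal B}_q)\to\mathbb{Z}\to0$.
   Context: ${\cal O}(\mathbb{C}^{\ast})$ is the algebra of holomorphic functions on $\mathbb{C}^{\ast}$. $A_q^{an}$ is the algebra generated by ${\cal O}(\mathbb{C}^{\ast})$ and an invertible generator $\xi$ with $\xi f(z)=f(qz)\xi$. ${\cal B}_q$ is the category of $A_q^{an}$-modules which are finitely presentable over ${\cal O}(\mathbb{C}^{\ast})$. $Pic({\cal B}_q)$ is the set of isomorphism classes of objects of ${\cal B}_q$ which are rank one (free) modules over ${\cal O}(\mathbb{C}^{\ast})$, with the group structure given by tensor product over ${\cal O}(\mathbb{C}^{\ast})$. *)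

theory Defs
  imports "HOL-Complex_Analysis.Complex_Analysis" "HOL-Algebra.Algebra"
begin

text \<open>The ring O(C^*) of holomorphic functions on C^*; elements are represented by
  functions complex => complex, normalised by the value 0 at the point 0.\<close>
definition Ohol :: "(complex \<Rightarrow> complex) set" where
  "Ohol = {f. f holomorphic_on (- {0}) \<and> f 0 = 0}"

definition one_O :: "complex \<Rightarrow> complex" where
  "one_O = (\<lambda>z. if z = 0 then 0 else 1)"

definition qshift :: "complex \<Rightarrow> (complex \<Rightarrow> complex) \<Rightarrow> (complex \<Rightarrow> complex)" where
  "qshift q f = (\<lambda>z. f (q * z))"

text \<open>An object of B_q which is free of rank one over O(C^*): after transporting the
  structure along an O-module isomorphism M = O, it is O itself with an action of the
  invertible generator xi, i.e. an additive bijection Phi of O with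
  Phi (f * g) = f(qz) * Phi g.\<close>
definition rank1_obj :: "complex \<Rightarrow> ((complex \<Rightarrow> complex) \<Rightarrow> (complex \<Rightarrow> complex)) \<Rightarrow> bool" where
  "rank1_obj q \<Phi> \<longleftrightarrow> bij_betw \<Phi> Ohol Ohol
     \<and> (\<forall>f\<in>Ohol. \<forall>g\<in>Ohol. \<Phi> (\<lambda>z. f z + g z) = (\<lambda>z. \<Phi> f z + \<Phi> g z))
     \<and> (\<forall>f\<in>Ohol. \<forall>g\<in>Ohol. \<Phi> (\<lambda>z. f z * g z) = (\<lambda>z. qshift q f z * \<Phi> g z))"

definition obj_iso :: "((complex \<Rightarrow> complex) \<Rightarrow> (complex \<Rightarrow> complex)) \<Rightarrow>
    ((complex \<Rightarrow> complex) \<Rightarrow> (complex \<Rightarrow> complex)) \<Rightarrow> bool" where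
  "obj_iso \<Phi> \<Psi> \<longleftrightarrow> (\<exists>T. bij_betw T Ohol Ohol
     \<and> (\<forall>f\<in>Ohol. \<forall>g\<in>Ohol. T (\<lambda>z. f z + g z) = (\<lambda>z. T f z + T g z))
     \<and> (\<forall>f\<in>Ohol. \<forall>g\<in>Ohol. T (\<lambda>z. f z * g z) = (\<lambda>z. f z * T g z))
     \<and> (\<forall>f\<in>Ohol. T (\<Phi> f) = \<Psi> (T f)))"

definition pic_class :: "complex \<Rightarrow> ((complex \<Rightarrow> complex) \<Rightarrow> (complex \<Rightarrow> complex)) \<Rightarrow>
    ((complex \<Rightarrow> complex) \<Rightarrow> (complex \<Rightarrow> complex)) set" where
  "pic_class q \<Phi> = {\<Psi>. rank1_obj q \<Psi> \<and> obj_iso \<Phi> \<Psi>}"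

text \<open>Tensor product over O: under O (x)_O O = O, f (x) g |-> f g, the diagonal action
  xi (f (x) g) = xi f (x) xi g becomes  f = f (x) 1 |-> Phi1 f * Phi2 1.\<close>
definition obj_tensor :: "((complex \<Rightarrow> complex) \<Rightarrow> (complex \<Rightarrow> complex)) \<Rightarrow>
    ((complex \<Rightarrow> complex) \<Rightarrow> (complex \<Rightarrow> complex)) \<Rightarrow>
    ((complex \<Rightarrow> complex) \<Rightarrow> (complex \<Rightarrow> complex))" where
  "obj_tensor \<Phi>1 \<Phi>2 = (\<lambda>f. if f \<in> Ohol then (\<lambda>z. \<Phi>1 f z * \<Phi>2 one_O z) else f)"

definition Pic_Bq :: "complex \<Rightarrow> ((complex \<Rightarrow> complex) \<Rightarrow> (complex \<Rightarrow> complex)) set monoid" where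
  "Pic_Bq q = \<lparr> carrier = {pic_class q \<Phi> | \<Phi>. rank1_obj q \<Phi>},
     monoid.mult = (\<lambda>A B. pic_class q (obj_tensor (SOME \<Phi>. \<Phi> \<in> A) (SOME \<Psi>. \<Psi> \<in> B))),
     one = pic_class q (qshift q) \<rparr>"

definition qorbit :: "complex \<Rightarrow> complex \<Rightarrow> complex set" where
  "qorbit q w = {w * q powi n | n. True}"

definition Cstar_mod_q :: "complex \<Rightarrow> complex set monoid" where
  "Cstar_mod_q q = \<lparr> carrier = {qorbit q w | w. w \<noteq> 0},
     monoid.mult = (\<lambda>A B. {a * b | a b. a \<in> A \<and> b \<in> B}),
     one = qorbit q 1 \<rparr>"

end

(*
  A rank one object is the ring O of holomorphic functions on C^* with xi acting by
  f |-> a * f(qz) for a unit a = xi 1; two units give isomorphic objects iff a' = a * b / b(qz)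
  for a unit b, and the tensor product multiplies the units. Every unit is z^m * exp h with a
  unique integer m, its degree, which is invariant under this gauge equivalence and maps the
  Picard group onto Z.

  A unit of degree zero is exp h, and it is equivalent to the constant exp c as soon as the
  q-difference equation g(qz) - g(z) = h(z) - c has a solution g on C^*. Splitting h into the
  regular and principal parts of its Laurent series, the equation is solved coefficientwise by
  dividing by q^n - 1; the Diophantine condition bounds these small divisors below geometrically,
  so the solution series are still entire. Conversely, for |q| = 1 two constants w, w' are
  equivalent only if w' is in w q^Z: otherwise exp (g z - g (qz)) would be a constant other
  than 1, and g would drift linearly along the orbit q^N on the unit circle although it is
  bounded there.
*)
theory Submission
  imports Defs
begin

section \<open>Laurent splitting on the punctured plane\<close>

lemma circlepath_0_eq: "circlepath 0 r t = r * exp (2 * of_real pi * \<i> * of_real t)"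
  by (simp add: circlepath_def part_circlepath_def linepath_def mult_ac)

lemma contour_integral_concentric_circlepaths_eq:
  assumes holF: "F holomorphic_on S" and S: "open S" and r: "0 < r" and s: "0 < s"
    and annulus: "\<And>w. min r s \<le> norm w \<Longrightarrow> norm w \<le> max r s \<Longrightarrow> w \<in> S"
  shows "contour_integral (circlepath 0 r) F = contour_integral (circlepath 0 s) F"
proof (rule Cauchy_theorem_homotopic_loops[OF _ S holF])
  show "homotopic_loops S (circlepath 0 r) (circlepath 0 s)"
  proof (rule homotopic_loops_linear)
    fix t :: real
    show "closed_segment (circlepath 0 r t) (circlepath 0 s t) \<subseteq> S"
    proof
      fix x assume "x \<in> closed_segment (circlepath 0 r t) (circlepath 0 s t)"
      then obtain u where u: "0 \<le> u" "u \<le> 1"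
        and x: "x = (1 - u) *\<^sub>R circlepath 0 r t + u *\<^sub>R circlepath 0 s t"
        by (auto simp: closed_segment_def)
      have "x = of_real ((1 - u) * r + u * s) * exp (2 * of_real pi * \<i> * of_real t)"
        by (simp add: x circlepath_0_eq scaleR_conv_of_real algebra_simps)
      hence "norm x = \<bar>(1 - u) * r + u * s\<bar>"
        by (simp only: norm_mult norm_of_real norm_exp_eq_Re) simp
      hence "norm x = (1 - u) * r + u * s"
        using u r s by simp
      moreover have "(1 - u) * min r s + u * min r s \<le> (1 - u) * r + u * s"
        using u by (intro add_mono mult_left_mono) auto
      moreover have "(1 - u) * r + u * s \<le> (1 - u) * max r s + u * max r s"
        using u by (intro add_mono mult_left_mono) auto
      ultimately show "x \<in> S" using annulus by (simp add: algebra_simps)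
    qed
  qed auto
qed auto

lemma contour_integrable_cauchy_kernel_circlepath:
  assumes h: "h holomorphic_on - {0}" and z: "norm z \<noteq> R" and R: "0 < R"
  shows "(\<lambda>w. h w / (w - z)) contour_integrable_on circlepath 0 R"
proof (rule contour_integrable_continuous_circlepath)
  have "continuous_on (sphere 0 R) h"
    by (rule continuous_on_subset[OF holomorphic_on_imp_continuous_on[OF h]]) (use R in auto)
  moreover have "\<forall>w\<in>sphere 0 R. w - z \<noteq> 0" using z by auto
  ultimately show "continuous_on (path_image (circlepath 0 R)) (\<lambda>w. h w / (w - z))"
    using R by (auto intro!: continuous_intros)
qed

lemma contour_integral_cauchy_kernel_radius_indep:
  assumes h: "h holomorphic_on - {0}" and R: "norm z < R" and R': "norm z < R'"
  shows "contour_integral (circlepath 0 R) (\<lambda>w. h w / (w - z))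
       = contour_integral (circlepath 0 R') (\<lambda>w. h w / (w - z))"
proof (rule contour_integral_concentric_circlepaths_eq[where S = "- {0} - {z}"])
  show "(\<lambda>w. h w / (w - z)) holomorphic_on - {0} - {z}"
    by (intro holomorphic_intros holomorphic_on_subset[OF h]) auto
  show "0 < R" "0 < R'" using R R' norm_ge_zero[of z] by linarith+
  fix w :: complex assume "min R R' \<le> norm w"
  hence "norm z < norm w" using R R' by linarith
  thus "w \<in> - {0} - {z}" by auto
qed (auto intro: open_Diff)

text \<open>The nonnegative-power part of the Laurent series of \<open>h\<close> on \<open>\<complex>\<^sup>*\<close>; any circle around
  \<open>0\<close> enclosing \<open>z\<close> may replace the one of radius \<open>|z| + 1\<close>.\<close>
definition laurent_regular_part :: "(complex \<Rightarrow> complex) \<Rightarrow> complex \<Rightarrow> complex" where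
  "laurent_regular_part h z =
     contour_integral (circlepath 0 (norm z + 1)) (\<lambda>w. h w / (w - z)) / (2 * of_real pi * \<i>)"

lemma laurent_regular_part_eq:
  assumes "h holomorphic_on - {0}" and "norm z < R"
  shows "laurent_regular_part h z
       = contour_integral (circlepath 0 R) (\<lambda>w. h w / (w - z)) / (2 * of_real pi * \<i>)"
  unfolding laurent_regular_part_def
  using contour_integral_cauchy_kernel_radius_indep[OF assms(1) _ assms(2), of "norm z + 1"] by simp

lemma laurent_regular_part_holomorphic:
  assumes h: "h holomorphic_on - {0}"
  shows "laurent_regular_part h holomorphic_on UNIV"
proof -
  have "laurent_regular_part h holomorphic_on ball 0 R" if R: "0 < R" for R
  proof -
    define g where "g z = contour_integral (circlepath 0 R) (\<lambda>w. h w / (w - z))" for z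
    have contf: "continuous_on (path_image (circlepath 0 R)) h"
      by (rule continuous_on_subset[OF holomorphic_on_imp_continuous_on[OF h]]) (use R in auto)
    have int: "((\<lambda>u. h u / (u - w) ^ 1) has_contour_integral g w) (circlepath 0 R)"
      if "w \<in> ball 0 R" for w
      using has_contour_integral_integral[OF contour_integrable_cauchy_kernel_circlepath[OF h _ R]]
        that by (simp add: g_def)
    have "g holomorphic_on ball 0 R"
      using Cauchy_next_derivative_circlepath(2)[OF contf int]
      by (fastforce simp: holomorphic_on_open)
    hence "(\<lambda>z. g z / (2 * of_real pi * \<i>)) holomorphic_on ball 0 R"
      by (intro holomorphic_intros) auto
    thus ?thesis
      by (rule holomorphic_transform) (use laurent_regular_part_eq[OF h] in \<open>auto simp: g_def\<close>)
  qed
  hence "laurent_regular_part h field_differentiable at z" for z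
    by (rule holomorphic_on_imp_differentiable_at[of _ "ball 0 (norm z + 1)"])
      (auto intro: add_nonneg_pos)
  thus ?thesis by (simp add: holomorphic_on_def field_differentiable_at_within)
qed

lemma cauchy_integral_formula_annulus:
  assumes h: "h holomorphic_on - {0}" and r: "0 < r" "r < norm z" and R: "norm z < R"
  shows "contour_integral (circlepath 0 R) (\<lambda>w. h w / (w - z))
       - contour_integral (circlepath 0 r) (\<lambda>w. h w / (w - z)) = 2 * of_real pi * \<i> * h z"
proof -
  have z0: "z \<noteq> 0" and R0: "0 < R" using r R by auto
  define \<phi> where "\<phi> = (\<lambda>w. if w = z then deriv h z else (h w - h z) / (w - z))"
  have "\<phi> holomorphic_on - {0}"
    unfolding \<phi>_def by (rule pole_lemma[OF h]) (use z0 in \<open>simp add: interior_open open_Compl\<close>)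
  hence "contour_integral (circlepath 0 R) \<phi> = contour_integral (circlepath 0 r) \<phi>"
    by (rule contour_integral_concentric_circlepaths_eq) (use r R in auto)
  moreover have "contour_integral (circlepath 0 \<rho>) \<phi>
      = contour_integral (circlepath 0 \<rho>) (\<lambda>w. h w / (w - z))
        - contour_integral (circlepath 0 \<rho>) (\<lambda>w. h z / (w - z))"
    if "0 < \<rho>" "\<rho> \<noteq> norm z" for \<rho>
  proof -
    have "contour_integral (circlepath 0 \<rho>) \<phi>
        = contour_integral (circlepath 0 \<rho>) (\<lambda>w. h w / (w - z) - h z / (w - z))"
      by (rule contour_integral_eq) (use that in \<open>auto simp: \<phi>_def diff_divide_distrib\<close>)
    thus ?thesis
      using that by (simp add: contour_integral_diff contour_integrable_cauchy_kernel_circlepath h)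
  qed
  moreover have "contour_integral (circlepath 0 R) (\<lambda>w. h z / (w - z)) = 2 * of_real pi * \<i> * h z"
    by (rule contour_integral_unique, rule Cauchy_integral_circlepath_simple) (use R in auto)
  moreover have "contour_integral (circlepath 0 r) (\<lambda>w. h z / (w - z)) = 0"
  proof (rule contour_integral_unique, rule Cauchy_theorem_convex_simple[where S = "ball 0 (norm z)"])
    show "(\<lambda>w. h z / (w - z)) holomorphic_on ball 0 (norm z)"
      by (intro holomorphic_intros) auto
  qed (use r in auto)
  ultimately show ?thesis using r R R0 by (simp add: algebra_simps)
qed

lemma laurent_principal_part_bound:
  assumes h: "h holomorphic_on - {0}" and B: "\<And>w. norm w = 1 \<Longrightarrow> norm (h w) \<le> B"
    and z: "1 < norm z"
  shows "norm (h z - laurent_regular_part h z) \<le> B / (norm z - 1)"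
proof -
  have B0: "0 \<le> B" using B[of 1] by (metis norm_ge_zero norm_one order_trans)
  define I where "I = contour_integral (circlepath 0 1) (\<lambda>w. h w / (w - z))"
  have "laurent_regular_part h z * (2 * of_real pi * \<i>) - I = 2 * of_real pi * \<i> * h z"
    using cauchy_integral_formula_annulus[OF h _ z, of "norm z + 1"]
      laurent_regular_part_eq[OF h, of z "norm z + 1"] by (simp add: I_def)
  hence eq: "h z - laurent_regular_part h z = - I / (2 * of_real pi * \<i>)"
    by (simp add: field_simps)
  have "norm I \<le> B / (norm z - 1) * (2 * pi * 1)"
    unfolding I_def
  proof (rule has_contour_integral_bound_circlepath[OF has_contour_integral_integral
        [OF contour_integrable_cauchy_kernel_circlepath[OF h]]])
    fix w :: complex assume w: "norm (w - 0) = 1"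
    have dist: "norm z - 1 \<le> norm (w - z)"
      using w norm_triangle_ineq2[of z w] by (simp add: norm_minus_commute)
    have hw: "norm (h w) \<le> B" using B w by simp
    show "norm (h w / (w - z)) \<le> B / (norm z - 1)"
      unfolding norm_divide by (rule frac_le[OF B0 hw _ dist]) (use z in simp)
  next
    show "0 \<le> B / (norm z - 1)" using B0 z by simp
  qed (use z in auto)
  hence "norm I / (2 * pi) \<le> B / (norm z - 1)" by (simp add: pos_divide_le_eq)
  thus ?thesis by (simp add: eq norm_divide norm_mult)
qed

lemma laurent_principal_part_tendsto_0:
  assumes h: "h holomorphic_on - {0}"
  shows "((\<lambda>u. h (1 / u) - laurent_regular_part h (1 / u)) \<longlongrightarrow> 0) (at 0)"
proof -
  have "bounded (h ` sphere 0 1)"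
    by (intro compact_imp_bounded compact_continuous_image
        continuous_on_subset[OF holomorphic_on_imp_continuous_on[OF h]]) auto
  then obtain B where B: "B > 0" "\<And>w. norm w = 1 \<Longrightarrow> norm (h w) \<le> B"
    by (auto simp: bounded_pos)
  have "norm (h (1 / u) - laurent_regular_part h (1 / u)) \<le> 2 * B * norm u"
    if u: "u \<noteq> 0" "norm u < 1/2" for u
  proof -
    define z where "z = 1 / u"
    have nz: "norm z = 1 / norm u" by (simp add: z_def norm_divide)
    have z: "norm z > 2" unfolding nz using u by (simp add: less_divide_eq)
    have "norm (h z - laurent_regular_part h z) \<le> B / (norm z - 1)"
      by (rule laurent_principal_part_bound[OF h B(2)]) (use z in simp_all)
    also have "\<dots> \<le> B / (norm z / 2)"
      by (intro divide_left_mono mult_pos_pos) (use z B in auto)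
    also have "\<dots> = 2 * B * norm u" using u by (simp add: nz)
    finally show ?thesis by (simp add: z_def)
  qed
  hence "\<forall>\<^sub>F u in at 0. norm (h (1 / u) - laurent_regular_part h (1 / u)) \<le> 2 * B * norm u"
    unfolding eventually_at by (intro exI[of _ "1/2"]) (auto simp: dist_norm)
  moreover have "((\<lambda>u. 2 * B * norm u) \<longlongrightarrow> 0) (at (0::complex))"
    by (auto intro!: tendsto_eq_intros)
  ultimately show ?thesis by (rule Lim_null_comparison)
qed

lemma laurent_splitting:
  assumes h: "h holomorphic_on - {0}"
  obtains P Q where "P holomorphic_on UNIV" "Q holomorphic_on UNIV"
    "\<And>z. z \<noteq> 0 \<Longrightarrow> h z = P z + Q (1 / z)"
proof -
  define P where "P = laurent_regular_part h"
  define Q where "Q u = (if u = 0 then 0 else h (1 / u) - P (1 / u))" for u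
  have P_holo: "P holomorphic_on UNIV"
    unfolding P_def by (rule laurent_regular_part_holomorphic[OF h])
  have "(\<lambda>u. (h \<circ> (\<lambda>u. 1 / u)) u - (P \<circ> (\<lambda>u. 1 / u)) u) holomorphic_on - {0}"
    by (intro holomorphic_intros holomorphic_on_compose_gen[OF _ h]
        holomorphic_on_compose_gen[OF _ P_holo]) auto
  hence "Q holomorphic_on - {0}"
    by (rule holomorphic_transform) (simp add: Q_def)
  moreover have "\<forall>\<^sub>F u in at 0. h (1 / u) - P (1 / u) = Q u"
    by (simp add: Q_def eventually_at_filter)
  hence "(Q \<longlongrightarrow> Q 0) (at 0)"
    using tendsto_cong laurent_principal_part_tendsto_0[OF h] by (fastforce simp: P_def Q_def)
  ultimately have "Q holomorphic_on UNIV"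
    using no_isolated_singularity'[of "{0}" Q UNIV] by (simp add: Compl_eq_Diff_UNIV)
  thus ?thesis using that P_holo by (simp add: Q_def)
qed

section \<open>The \<open>q\<close>-difference equation\<close>

lemma diophantine_imp_geometric_lower_bound:
  fixes q :: complex
  assumes L: "L > 0"
    and dio: "\<forall>n::int. n \<noteq> 0 \<longrightarrow> cmod (q powi n - 1) \<ge> C * \<bar>real_of_int n\<bar> powr (- L)"
    and C: "C > 0" and n: "n > 0"
  shows "C * exp (- L) ^ n \<le> norm (q ^ n - 1)"
proof -
  have "exp (- L) ^ n = exp (- (real n * L))" by (simp add: exp_of_nat_mult[symmetric])
  also have "\<dots> \<le> exp (- (L * ln (real n)))"
    using L n ln_less_self[of "real n"] by (simp add: mult.commute mult_left_mono less_imp_le)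
  also have "\<dots> = real n powr (- L)" using n by (simp add: powr_def)
  finally have "C * exp (- L) ^ n \<le> C * real n powr (- L)" using C by simp
  also have "\<dots> \<le> norm (q ^ n - 1)" using dio[rule_format, of "int n"] n by simp
  finally show ?thesis .
qed

lemma entire_taylor_series_summable_norm:
  assumes "P holomorphic_on UNIV"
  shows "summable (\<lambda>n. norm ((deriv ^^ n) P 0 / fact n * w ^ n))"
proof -
  define x :: complex where "x = of_real (norm w + 1)"
  have "(\<lambda>n. (deriv ^^ n) P 0 / fact n * x ^ n) sums P x"
    using holomorphic_power_series[OF holomorphic_on_subset[OF assms], of 0 "norm x + 1" x] by simp
  moreover have "norm w < norm x" unfolding x_def norm_of_real by simp
  ultimately show ?thesis by (rule powser_insidea[OF sums_summable])
qed

lemma powser_holomorphic_if_summable_everywhere: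
  fixes a :: "nat \<Rightarrow> complex"
  assumes "\<And>z. summable (\<lambda>n. a n * z ^ n)"
  shows "(\<lambda>z. suminf (\<lambda>n. a n * z ^ n)) holomorphic_on UNIV"
proof -
  have "conv_radius a = \<infinity>" by (rule conv_radius_inftyI'') (rule assms)
  hence "((\<lambda>z. suminf (\<lambda>n. a n * z ^ n))
          has_field_derivative (suminf (\<lambda>n. diffs a n * z ^ n))) (at z)" for z
    by (intro has_field_derivative_powser) simp
  thus ?thesis by (auto simp: holomorphic_on_def field_differentiable_def
                              field_differentiable_at_within)
qed

lemma summable_div_small_divisors:
  fixes q :: complex and c :: "nat \<Rightarrow> complex"
  assumes c: "\<And>w. summable (\<lambda>n. norm (c n * w ^ n))" and C: "C > 0" and r: "r > 0"
    and small_div: "\<And>n. n > 0 \<Longrightarrow> C * r ^ n \<le> norm (q ^ n - 1)"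
  shows "summable (\<lambda>n. (if n = 0 then 0 else c n / (q ^ n - 1)) * z ^ n)"
proof (rule summable_norm_cancel, rule summable_comparison_test)
  have "norm ((if n = 0 then 0 else c n / (q ^ n - 1)) * z ^ n) \<le> norm (c n * (z / r) ^ n) / C"
    for n
  proof (cases "n = 0")
    case False
    have pos: "0 < C * r ^ n" using C r by simp
    have le: "C * r ^ n \<le> norm (q ^ n - 1)" using small_div False by simp
    have "norm (c n * z ^ n) / norm (q ^ n - 1) \<le> norm (c n * z ^ n) / (C * r ^ n)"
      by (rule divide_left_mono[OF le norm_ge_zero
          mult_pos_pos[OF order_less_le_trans[OF pos le] pos]])
    thus ?thesis
      using False r by (simp add: norm_mult norm_divide norm_power power_divide mult.commute)
  qed (use C in simp)
  thus "\<exists>N. \<forall>n\<ge>N. norm (norm ((if n = 0 then 0 else c n / (q ^ n - 1)) * z ^ n))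
      \<le> norm (c n * (z / r) ^ n) / C"
    by simp
  show "summable (\<lambda>n. norm (c n * (z / r) ^ n) / C)"
    using c by (rule summable_divide)
qed

lemma entire_q_difference_equation_solvable:
  fixes q :: complex
  assumes P: "P holomorphic_on UNIV" and C: "C > 0" and r: "r > 0"
    and small_div: "\<And>n. n > 0 \<Longrightarrow> C * r ^ n \<le> norm (q ^ n - 1)"
  obtains G where "G holomorphic_on UNIV" "\<And>z. G (q * z) - G z = P z - P 0"
proof -
  define c where "c n = (deriv ^^ n) P 0 / fact n" for n
  define \<alpha> where "\<alpha> n = (if n = 0 then 0 else c n / (q ^ n - 1))" for n
  have summable: "summable (\<lambda>n. \<alpha> n * z ^ n)" for z
    unfolding \<alpha>_def c_def using entire_taylor_series_summable_norm[OF P] C r small_div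
    by (rule summable_div_small_divisors)
  define G where "G z = suminf (\<lambda>n. \<alpha> n * z ^ n)" for z
  have "G (q * z) - G z = P z - P 0" for z
  proof -
    have "(\<lambda>n. \<alpha> n * (q * z) ^ n - \<alpha> n * z ^ n) sums (G (q * z) - G z)"
      unfolding G_def by (intro sums_diff summable_sums summable)
    moreover have "q ^ n - 1 \<noteq> 0" if "n > 0" for n
      using small_div[OF that] mult_pos_pos[OF C zero_less_power[OF r, of n]] by auto
    hence "\<alpha> n * (q * z) ^ n - \<alpha> n * z ^ n = (if n = 0 then 0 else c n * z ^ n)" for n
      by (simp add: \<alpha>_def power_mult_distrib field_simps)
    moreover have "(\<lambda>n. if n = 0 then 0 else c n * z ^ n) sums (P z - P 0)"
      using sums_diff[OF holomorphic_power_series[OF holomorphic_on_subset[OF P], of 0 "norm z + 1" z]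
          sums_single[of 0 "\<lambda>n. c n * z ^ n"]]
      by (simp add: c_def if_distrib cong: if_cong)
    ultimately show ?thesis using sums_unique2 by simp
  qed
  moreover have "G holomorphic_on UNIV"
    unfolding G_def by (rule powser_holomorphic_if_summable_everywhere[OF summable])
  ultimately show ?thesis using that by blast
qed

lemma punctured_q_difference_equation_solvable:
  fixes q :: complex
  assumes h: "h holomorphic_on - {0}" and q: "q \<noteq> 0" and C: "C > 0" and r: "r > 0"
    and small_div: "\<And>n. n > 0 \<Longrightarrow> C * r ^ n \<le> norm (q ^ n - 1)"
  obtains c g where "g holomorphic_on - {0}" "\<And>z. z \<noteq> 0 \<Longrightarrow> g (q * z) - g z = h z - c"
proof -
  obtain P Q where P: "P holomorphic_on UNIV" and Q: "Q holomorphic_on UNIV"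
    and hPQ: "\<And>z. z \<noteq> 0 \<Longrightarrow> h z = P z + Q (1 / z)"
    using laurent_splitting[OF h] by blast
  have small_div': "C * (r / norm q) ^ n \<le> norm (inverse q ^ n - 1)" if "n > 0" for n
  proof -
    have "inverse q ^ n - 1 = - (q ^ n - 1) / q ^ n"
      using q by (simp add: power_inverse field_simps)
    thus ?thesis
      using small_div[OF that] q
      by (simp add: norm_divide norm_power power_divide norm_minus_commute divide_right_mono)
  qed
  obtain G1 where G1: "G1 holomorphic_on UNIV" "\<And>z. G1 (q * z) - G1 z = P z - P 0"
    using entire_q_difference_equation_solvable[OF P C r small_div] by blast
  obtain G2 where G2: "G2 holomorphic_on UNIV" "\<And>z. G2 (inverse q * z) - G2 z = Q z - Q 0"
    using entire_q_difference_equation_solvable[OF Q C _ small_div'] r q by auto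
  define g where "g = (\<lambda>z. G1 z + G2 (1 / z))"
  have "(\<lambda>z. G1 z + (G2 \<circ> (\<lambda>z. 1 / z)) z) holomorphic_on - {0}"
    by (intro holomorphic_intros holomorphic_on_subset[OF G1(1)]
        holomorphic_on_compose_gen[OF _ G2(1)]) auto
  hence "g holomorphic_on - {0}" by (simp add: g_def o_def)
  moreover have "g (q * z) - g z = h z - (P 0 + Q 0)" if z: "z \<noteq> 0" for z
  proof -
    have "g (q * z) - g z = (G1 (q * z) - G1 z) + (G2 (inverse q * (1 / z)) - G2 (1 / z))"
      by (simp add: g_def field_simps)
    also have "\<dots> = h z - (P 0 + Q 0)" by (simp only: G1(2) G2(2) hPQ[OF z]) simp
    finally show ?thesis .
  qed
  ultimately show ?thesis using that by blast
qed

section \<open>Logarithms on the punctured plane\<close>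

lemma constant_on_if_exp_constant:
  fixes f :: "'a::topological_space \<Rightarrow> complex"
  assumes S: "connected S" and cf: "continuous_on S f"
    and e: "\<And>x y. x \<in> S \<Longrightarrow> y \<in> S \<Longrightarrow> exp (f x) = exp (f y)"
  shows "f constant_on S"
proof (rule continuous_discrete_range_constant[OF S cf])
  fix x assume x: "x \<in> S"
  show "\<exists>e>0. \<forall>y. y \<in> S \<and> f y \<noteq> f x \<longrightarrow> e \<le> norm (f y - f x)"
  proof (intro exI[of _ "2 * pi"] conjI allI impI)
    fix y assume y: "y \<in> S \<and> f y \<noteq> f x"
    then obtain n :: int where n: "f y = f x + (of_int (2 * n) * pi) * \<i>"
      using e[of y x] x by (auto simp: exp_eq)
    with y have "1 \<le> \<bar>real_of_int n\<bar>" by auto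
    moreover have "norm (f y - f x) = 2 * pi * \<bar>real_of_int n\<bar>"
      using n by (simp add: norm_mult abs_mult)
    ultimately show "2 * pi \<le> norm (f y - f x)" by simp
  qed simp
qed

lemma exp_invariant_if_periodic:
  fixes G :: "complex \<Rightarrow> 'a"
  assumes periodic: "\<And>w. G (w + 2 * of_real pi * \<i>) = G w" and uv: "exp u = exp v"
  shows "G u = G v"
proof -
  have shift: "G (w + of_int k * (2 * of_real pi * \<i>)) = G w" for w k
  proof (induction k rule: int_induct[where k = 0])
    case (step1 i)
    thus ?case using periodic[of "w + of_int i * (2 * of_real pi * \<i>)"]
      by (simp add: algebra_simps)
  next
    case (step2 i)
    thus ?case using periodic[of "w + of_int (i - 1) * (2 * of_real pi * \<i>)"]
      by (simp add: algebra_simps)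
  qed simp
  obtain k :: int where "u = v + of_int (2 * k) * pi * \<i>"
    using uv by (auto simp: exp_eq)
  hence "u = v + of_int k * (2 * of_real pi * \<i>)" by simp
  thus ?thesis using shift by simp
qed

lemma div_notin_nonpos_Reals_if_in_ball:
  fixes z z0 :: complex
  assumes z: "z \<in> ball z0 (norm z0)"
  shows "z / z0 \<notin> \<real>\<^sub>\<le>\<^sub>0"
proof -
  have z0: "z0 \<noteq> 0" using z by auto
  have "norm (1 - z / z0) = norm ((z0 - z) / z0)" using z0 by (simp add: field_simps)
  also have "\<dots> < 1" using z z0 by (simp add: norm_divide dist_norm)
  finally have "Re (z / z0) > 0" using abs_Re_le_cmod[of "1 - z / z0"] by simp
  thus ?thesis using complex_nonpos_Reals_iff not_le by blast
qed

lemma holomorphic_on_Ln_comp_if_exp_invariant: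
  assumes G: "G holomorphic_on UNIV" and inv: "\<And>u v. exp u = exp v \<Longrightarrow> G u = G v"
  shows "(\<lambda>z. G (Ln z)) holomorphic_on - {0}"
proof -
  have "(\<lambda>z. G (Ln z)) field_differentiable at z0" if z0: "z0 \<noteq> 0" for z0
  proof -
    have "(\<lambda>z. Ln (z / z0) + Ln z0) holomorphic_on ball z0 (norm z0)"
      using z0 div_notin_nonpos_Reals_if_in_ball by (intro holomorphic_intros) auto
    hence "(G \<circ> (\<lambda>z. Ln (z / z0) + Ln z0)) holomorphic_on ball z0 (norm z0)"
      by (rule holomorphic_on_compose_gen[OF _ G]) auto
    moreover have "(G \<circ> (\<lambda>z. Ln (z / z0) + Ln z0)) z = G (Ln z)" if "z \<in> ball z0 (norm z0)" for z
    proof -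
      have "z \<noteq> 0" using that by (auto simp: dist_norm)
      hence "exp (Ln (z / z0) + Ln z0) = exp (Ln z)" using z0 by (simp add: exp_add)
      thus ?thesis unfolding o_def by (rule inv)
    qed
    ultimately have "(\<lambda>z. G (Ln z)) holomorphic_on ball z0 (norm z0)"
      by (rule holomorphic_transform)
    thus ?thesis using z0 holomorphic_on_imp_differentiable_at by auto
  qed
  thus ?thesis by (auto simp: holomorphic_on_def field_differentiable_at_within)
qed

lemma nonvanishing_holomorphic_punctured_eq_powi_exp:
  assumes a: "a holomorphic_on - {0}" and nz: "\<And>z. z \<noteq> 0 \<Longrightarrow> a z \<noteq> 0"
  obtains m :: int and h where "h holomorphic_on - {0}" "\<And>z. z \<noteq> 0 \<Longrightarrow> a z = z powi m * exp (h z)"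
proof -
  have "(a \<circ> exp) holomorphic_on UNIV"
    by (rule holomorphic_on_compose_gen[OF _ a]) (auto intro: holomorphic_intros)
  then obtain H where H: "H holomorphic_on UNIV" and He: "\<And>w. exp (H w) = a (exp w)"
    using holomorphic_logarithm_exists[of UNIV "a \<circ> exp" 0] nz by auto
  define D where "D w = H (w + 2 * of_real pi * \<i>) - H w" for w
  have exp_D: "exp (D w) = 1" for w
    using He[of w] He[of "w + 2 * of_real pi * \<i>"] nz[of "exp w"]
    by (simp add: D_def exp_diff exp_add)
  have cH: "continuous_on UNIV H" by (rule holomorphic_on_imp_continuous_on[OF H])
  have "continuous_on UNIV D" unfolding D_def
    by (intro continuous_on_diff cH continuous_on_compose2[OF cH] continuous_intros) auto
  hence "D constant_on UNIV"
    by (rule constant_on_if_exp_constant[OF connected_UNIV]) (simp add: exp_D)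
  moreover obtain n :: int where "D 0 = of_int (2 * n) * pi * \<i>"
    using exp_D[of 0] exp_eq[of "D 0" 0] by auto
  ultimately have "D w = of_int (2 * n) * pi * \<i>" for w
    by (metis UNIV_I constant_on_def)
  hence HD: "H (w + 2 * of_real pi * \<i>) = H w + 2 * of_real pi * \<i> * of_int n" for w
    by (simp add: D_def algebra_simps)
  define G where "G w = H w - of_int n * w" for w
  have "(\<lambda>z. G (Ln z)) holomorphic_on - {0}"
  proof (rule holomorphic_on_Ln_comp_if_exp_invariant)
    show "G holomorphic_on UNIV" unfolding G_def by (intro holomorphic_intros H)
    show "G u = G v" if "exp u = exp v" for u v
      by (rule exp_invariant_if_periodic[OF _ that]) (unfold G_def HD, simp add: algebra_simps)
  qed
  moreover have "a z = z powi n * exp (G (Ln z))" if "z \<noteq> 0" for z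
  proof -
    have "a z = exp (H (Ln z))" using He[of "Ln z"] that by simp
    also have "\<dots> = exp (Ln z) powi n * exp (G (Ln z))"
      by (simp add: G_def exp_power_int exp_diff)
    finally show ?thesis using that by simp
  qed
  ultimately show ?thesis using that by blast
qed

lemma powi_eq_exp_holomorphic_imp_zero:
  assumes h: "h holomorphic_on - {0}" and e: "\<And>z. z \<noteq> 0 \<Longrightarrow> z powi k = exp (h z)"
  shows "k = 0"
proof -
  define f where "f t = h (exp (\<i> * of_real t)) - \<i> * of_int k * of_real t" for t :: real
  have "continuous_on UNIV f" unfolding f_def
    by (intro continuous_intros continuous_on_compose2[OF holomorphic_on_imp_continuous_on[OF h]])
       auto
  moreover have "exp (f t) = 1" for t
    using e[of "exp (\<i> * of_real t)"] by (simp add: f_def exp_diff exp_power_int mult_ac)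
  ultimately have "f constant_on UNIV"
    by (intro constant_on_if_exp_constant[OF connected_UNIV]) auto
  hence "f 0 = f (2 * pi)" by (auto simp: constant_on_def)
  moreover have "exp (\<i> * of_real (2 * pi)) = 1"
    using exp_two_pi_i by (simp add: mult_ac)
  ultimately show ?thesis by (simp add: f_def)
qed

lemma circle_q_difference_constant_eq_0:
  fixes q :: complex and h :: "complex \<Rightarrow> complex"
  assumes h: "continuous_on (sphere 0 1) h" and q: "norm q = 1"
    and step: "\<And>z. norm z = 1 \<Longrightarrow> h z - h (q * z) = k"
  shows "k = 0"
proof -
  have orbit: "h (q ^ N) = h 1 - of_nat N * k" for N
  proof (induction N)
    case (Suc N)
    thus ?case using step[of "q ^ N"] q by (simp add: norm_power algebra_simps)
  qed simp
  obtain B where B: "\<forall>w\<in>sphere 0 1. norm (h w) \<le> B"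
    using compact_imp_bounded[OF compact_continuous_image[OF h]] by (auto simp: bounded_iff)
  have drift: "real N * norm k \<le> 2 * B" for N
  proof -
    have "norm (of_nat N * k) = norm (h 1 - h (q ^ N))" using orbit[of N] by simp
    also have "\<dots> \<le> norm (h 1) + norm (h (q ^ N))" by (rule norm_triangle_ineq4)
    also have "\<dots> \<le> 2 * B"
      using B[rule_format, of 1] B[rule_format, of "q ^ N"] q by (simp add: norm_power)
    finally show ?thesis by (simp add: norm_mult)
  qed
  show "k = 0"
  proof (rule ccontr)
    assume "k \<noteq> 0"
    obtain N :: nat where "real N > 2 * B / norm k" using reals_Archimedean2 by blast
    hence "real N * norm k > 2 * B" using \<open>k \<noteq> 0\<close> by (simp add: field_simps)
    thus False using drift[of N] by simp
  qed
qed

lemma exp_q_difference_constant_eq_1: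
  fixes q :: complex
  assumes h: "h holomorphic_on - {0}" and q: "norm q = 1"
    and e: "\<And>z. z \<noteq> 0 \<Longrightarrow> exp (h z - h (q * z)) = \<kappa>"
  shows "\<kappa> = 1"
proof -
  have q0: "q \<noteq> 0" using q by auto
  have ch: "continuous_on (- {0}) h" using h holomorphic_on_imp_continuous_on by blast
  have const: "(\<lambda>z. h z - h (q * z)) constant_on - {0}"
  proof (rule constant_on_if_exp_constant)
    show "connected (- {0::complex})" by (rule connected_punctured_universe) simp
    show "continuous_on (- {0}) (\<lambda>z. h z - h (q * z))"
      by (intro continuous_on_diff ch continuous_on_compose2[OF ch] continuous_intros)
         (auto simp: q0)
  qed (simp add: e)
  have "h z - h (q * z) = h 1 - h q" if "norm z = 1" for z
  proof -
    have "z \<noteq> 0" using that by auto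
    thus ?thesis
      using const unfolding constant_on_def by (metis ComplI mult_1_right singletonD zero_neq_one)
  qed
  moreover have "continuous_on (sphere 0 1) h" by (rule continuous_on_subset[OF ch]) auto
  ultimately have "h 1 - h q = 0" using circle_q_difference_constant_eq_0[OF _ q] by blast
  thus ?thesis using e[of 1] by simp
qed

section \<open>Rank one objects\<close>

lemma Ohol_restrict:
  assumes "F holomorphic_on - {0}"
  shows "(\<lambda>z. if z = 0 then 0 else F z) \<in> Ohol"
proof -
  have "(\<lambda>z. if z = 0 then 0 else F z) holomorphic_on - {0}"
    by (rule holomorphic_transform[OF assms]) auto
  thus ?thesis by (simp add: Ohol_def)
qed

lemma Ohol_zero_at_0: "f \<in> Ohol \<Longrightarrow> f 0 = 0"
  by (simp add: Ohol_def)

lemma Ohol_mult: "f \<in> Ohol \<Longrightarrow> g \<in> Ohol \<Longrightarrow> (\<lambda>z. f z * g z) \<in> Ohol"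
  unfolding Ohol_def by (auto intro: holomorphic_intros)

lemma Ohol_add: "f \<in> Ohol \<Longrightarrow> g \<in> Ohol \<Longrightarrow> (\<lambda>z. f z + g z) \<in> Ohol"
  unfolding Ohol_def by (auto intro: holomorphic_intros)

lemma holomorphic_on_punctured_rescale:
  assumes "q \<noteq> 0" and "f holomorphic_on - {0}"
  shows "(\<lambda>z. f (q * z)) holomorphic_on - {0}"
proof -
  have "(f \<circ> (\<lambda>z. q * z)) holomorphic_on - {0}"
    using assms by (intro holomorphic_on_compose_gen[OF _ assms(2)] holomorphic_intros) auto
  thus ?thesis by (simp add: o_def)
qed

lemma Ohol_qshift: "q \<noteq> 0 \<Longrightarrow> f \<in> Ohol \<Longrightarrow> qshift q f \<in> Ohol"
  unfolding Ohol_def qshift_def using holomorphic_on_punctured_rescale by auto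

lemma one_O_in_Ohol: "one_O \<in> Ohol"
  using Ohol_restrict[of "\<lambda>_. 1"] by (simp add: one_O_def)

lemma Ohol_mult_one_O: "f \<in> Ohol \<Longrightarrow> (\<lambda>z. f z * one_O z) = f"
  by (auto simp: one_O_def Ohol_zero_at_0)

lemma qshift_one_O: "q \<noteq> 0 \<Longrightarrow> qshift q one_O = one_O"
  by (simp add: qshift_def one_O_def fun_eq_iff)

definition Ounits :: "(complex \<Rightarrow> complex) set" where
  "Ounits = {a \<in> Ohol. \<forall>z. z \<noteq> 0 \<longrightarrow> a z \<noteq> 0}"

definition Omult :: "(complex \<Rightarrow> complex) \<Rightarrow> (complex \<Rightarrow> complex) \<Rightarrow> complex \<Rightarrow> complex" where
  "Omult a b = (\<lambda>z. a z * b z)"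

definition Oinv :: "(complex \<Rightarrow> complex) \<Rightarrow> complex \<Rightarrow> complex" where
  "Oinv a = (\<lambda>z. if z = 0 then 0 else 1 / a z)"

lemma Ounits_Ohol: "a \<in> Ounits \<Longrightarrow> a \<in> Ohol"
  by (simp add: Ounits_def)

lemma Ounits_nonzero: "a \<in> Ounits \<Longrightarrow> z \<noteq> 0 \<Longrightarrow> a z \<noteq> 0"
  by (simp add: Ounits_def)

lemma Ounits_holomorphic: "a \<in> Ounits \<Longrightarrow> a holomorphic_on - {0}"
  by (simp add: Ounits_def Ohol_def)

lemma Ounits_if_mult_eq_one_O: "a \<in> Ohol \<Longrightarrow> (\<And>z. c z * a z = one_O z) \<Longrightarrow> a \<in> Ounits"
  by (auto simp: Ounits_def one_O_def) (metis mult_zero_right zero_neq_one)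

lemma one_O_in_Ounits: "one_O \<in> Ounits"
  using one_O_in_Ohol by (simp add: Ounits_def one_O_def)

lemma Omult_in_Ounits: "a \<in> Ounits \<Longrightarrow> b \<in> Ounits \<Longrightarrow> Omult a b \<in> Ounits"
  by (auto simp: Ounits_def Omult_def intro: Ohol_mult)

lemma Oinv_in_Ounits:
  assumes "a \<in> Ounits"
  shows "Oinv a \<in> Ounits"
proof -
  have "(\<lambda>z. 1 / a z) holomorphic_on - {0}"
    using assms by (intro holomorphic_intros Ounits_holomorphic) (auto simp: Ounits_nonzero)
  thus ?thesis using assms Ohol_restrict by (auto simp: Ounits_def Oinv_def)
qed

lemma Omult_Oinv: "a \<in> Ounits \<Longrightarrow> Omult (Oinv a) a = one_O"
  by (auto simp: Omult_def Oinv_def one_O_def Ounits_nonzero)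

lemma Omult_one_O: "a \<in> Ohol \<Longrightarrow> Omult one_O a = a"
  using Ohol_mult_one_O[of a] by (simp add: Omult_def mult.commute)

lemma Omult_assoc: "Omult (Omult a b) c = Omult a (Omult b c)"
  by (simp add: Omult_def mult.assoc)

lemma bij_betw_Omult_unit:
  assumes b: "b \<in> Ounits"
  shows "bij_betw (\<lambda>g. Omult g b) Ohol Ohol"
proof (rule bij_betw_byWitness[where f' = "\<lambda>g. Omult g (Oinv b)"])
  have "Omult (Omult g b) (Oinv b) = g" "Omult (Omult g (Oinv b)) b = g" if "g \<in> Ohol" for g
    using that b by (auto simp: Omult_def Oinv_def Ohol_zero_at_0 Ounits_nonzero)
  thus "\<forall>g\<in>Ohol. Omult (Omult g b) (Oinv b) = g" "\<forall>g\<in>Ohol. Omult (Omult g (Oinv b)) b = g"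
    by auto
  show "(\<lambda>g. Omult g b) ` Ohol \<subseteq> Ohol" "(\<lambda>g. Omult g (Oinv b)) ` Ohol \<subseteq> Ohol"
    using b Oinv_in_Ounits[OF b] by (auto simp: Omult_def intro: Ohol_mult Ounits_Ohol)
qed

text \<open>Every rank one object is isomorphic to \<open>\<O>\<close> with \<open>\<xi>\<close> acting by \<open>f \<mapsto> a \<cdot> \<sigma>\<^sub>q f\<close>
  for the unit \<open>a = \<xi> 1\<close>.\<close>
definition twisted_shift ::
    "complex \<Rightarrow> (complex \<Rightarrow> complex) \<Rightarrow> (complex \<Rightarrow> complex) \<Rightarrow> complex \<Rightarrow> complex" where
  "twisted_shift q a = (\<lambda>f z. f (q * z) * a z)"

lemma twisted_shift_one_O: "q \<noteq> 0 \<Longrightarrow> a \<in> Ohol \<Longrightarrow> twisted_shift q a one_O = a"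
  by (auto simp: twisted_shift_def one_O_def Ohol_zero_at_0)

lemma bij_betw_twisted_shift:
  assumes q: "q \<noteq> 0" and a: "a \<in> Ounits"
  shows "bij_betw (twisted_shift q a) Ohol Ohol"
proof (rule bij_betw_byWitness[where f' = "\<lambda>g w. if w = 0 then 0 else g (w / q) / a (w / q)"])
  show "\<forall>f\<in>Ohol. (\<lambda>w. if w = 0 then 0 else twisted_shift q a f (w / q) / a (w / q)) = f"
    using q a by (auto simp: twisted_shift_def Ohol_zero_at_0 Ounits_nonzero)
  show "\<forall>g\<in>Ohol. twisted_shift q a (\<lambda>w. if w = 0 then 0 else g (w / q) / a (w / q)) = g"
    using q a by (auto simp: twisted_shift_def fun_eq_iff Ohol_zero_at_0 Ounits_nonzero)
  show "twisted_shift q a ` Ohol \<subseteq> Ohol"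
    using q a Ohol_mult[OF Ohol_qshift Ounits_Ohol]
    by (auto simp: twisted_shift_def qshift_def)
  have "(\<lambda>w. g (inverse q * w) / a (inverse q * w)) holomorphic_on - {0}" if "g \<in> Ohol" for g
    using that q a
    by (intro holomorphic_intros holomorphic_on_punctured_rescale)
       (auto simp: Ohol_def Ounits_holomorphic Ounits_nonzero)
  thus "(\<lambda>g w. if w = 0 then 0 else g (w / q) / a (w / q)) ` Ohol \<subseteq> Ohol"
    by (auto intro!: Ohol_restrict simp: divide_inverse mult.commute)
qed

lemma rank1_obj_if_eq_twisted_shift:
  assumes q: "q \<noteq> 0" and a: "a \<in> Ounits" and eq: "\<And>f. f \<in> Ohol \<Longrightarrow> \<Phi> f = twisted_shift q a f"
  shows "rank1_obj q \<Phi>"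
  unfolding rank1_obj_def
proof (intro conjI ballI)
  show "bij_betw \<Phi> Ohol Ohol"
    using bij_betw_twisted_shift[OF q a] bij_betw_cong[of Ohol \<Phi> "twisted_shift q a"] eq by blast
  fix f g assume f: "f \<in> Ohol" and g: "g \<in> Ohol"
  show "\<Phi> (\<lambda>z. f z + g z) = (\<lambda>z. \<Phi> f z + \<Phi> g z)"
    using f g by (simp add: eq Ohol_add twisted_shift_def algebra_simps)
  show "\<Phi> (\<lambda>z. f z * g z) = (\<lambda>z. qshift q f z * \<Phi> g z)"
    using f g by (simp add: eq Ohol_mult twisted_shift_def qshift_def mult_ac)
qed

lemma rank1_obj_twisted_shift: "q \<noteq> 0 \<Longrightarrow> a \<in> Ounits \<Longrightarrow> rank1_obj q (twisted_shift q a)"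
  by (rule rank1_obj_if_eq_twisted_shift) auto

lemma rank1_obj_eq_twisted_shift:
  assumes q: "q \<noteq> 0" and \<Phi>: "rank1_obj q \<Phi>"
  shows "\<Phi> one_O \<in> Ounits" "\<And>f. f \<in> Ohol \<Longrightarrow> \<Phi> f = twisted_shift q (\<Phi> one_O) f"
proof -
  have bij: "bij_betw \<Phi> Ohol Ohol"
    and mult: "\<And>f g. f \<in> Ohol \<Longrightarrow> g \<in> Ohol \<Longrightarrow> \<Phi> (\<lambda>z. f z * g z) = (\<lambda>z. qshift q f z * \<Phi> g z)"
    using \<Phi> by (auto simp: rank1_obj_def)
  show eq: "\<Phi> f = twisted_shift q (\<Phi> one_O) f" if "f \<in> Ohol" for f
    using mult[OF that one_O_in_Ohol] by (simp add: Ohol_mult_one_O[OF that] twisted_shift_def qshift_def)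
  obtain g where "g \<in> Ohol" "\<Phi> g = one_O"
    using bij one_O_in_Ohol by (metis bij_betw_iff_bijections)
  hence "qshift q g z * \<Phi> one_O z = one_O z" for z
    using eq by (simp add: twisted_shift_def qshift_def fun_eq_iff)
  moreover have "\<Phi> one_O \<in> Ohol" using bij one_O_in_Ohol by (auto simp: bij_betw_def)
  ultimately show "\<Phi> one_O \<in> Ounits" by (intro Ounits_if_mult_eq_one_O)
qed

text \<open>Isomorphism of the objects given by \<open>a\<close> and \<open>a'\<close>: \<open>a' = a \<cdot> b / \<sigma>\<^sub>q b\<close> for a unit \<open>b\<close>.\<close>
definition gauge_equiv :: "complex \<Rightarrow> (complex \<Rightarrow> complex) \<Rightarrow> (complex \<Rightarrow> complex) \<Rightarrow> bool" where
  "gauge_equiv q a a' \<longleftrightarrow> (\<exists>b\<in>Ounits. \<forall>z. a' z * b (q * z) = a z * b z)"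

lemma O_linear_bij_eq_Omult:
  assumes bij: "bij_betw T Ohol Ohol"
    and O_linear: "\<forall>f\<in>Ohol. \<forall>g\<in>Ohol. T (\<lambda>z. f z * g z) = (\<lambda>z. f z * T g z)"
  shows "T one_O \<in> Ounits" "\<And>g. g \<in> Ohol \<Longrightarrow> T g = Omult g (T one_O)"
proof -
  show eq: "T g = Omult g (T one_O)" if "g \<in> Ohol" for g
    using O_linear[rule_format, OF that one_O_in_Ohol] Ohol_mult_one_O[OF that] by (simp add: Omult_def)
  obtain g where "g \<in> Ohol" "T g = one_O"
    using bij one_O_in_Ohol by (metis bij_betw_iff_bijections)
  hence "g z * T one_O z = one_O z" for z
    using eq by (simp add: Omult_def fun_eq_iff)
  moreover have "T one_O \<in> Ohol" using bij one_O_in_Ohol by (auto simp: bij_betw_def)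
  ultimately show "T one_O \<in> Ounits" by (intro Ounits_if_mult_eq_one_O)
qed

lemma obj_iso_imp_gauge_equiv:
  assumes q: "q \<noteq> 0" and \<Phi>: "rank1_obj q \<Phi>" and \<Psi>: "rank1_obj q \<Psi>" and iso: "obj_iso \<Phi> \<Psi>"
  shows "gauge_equiv q (\<Phi> one_O) (\<Psi> one_O)"
proof -
  obtain T where bij: "bij_betw T Ohol Ohol"
    and O_linear: "\<forall>f\<in>Ohol. \<forall>g\<in>Ohol. T (\<lambda>z. f z * g z) = (\<lambda>z. f z * T g z)"
    and intertwines: "T (\<Phi> one_O) = \<Psi> (T one_O)"
    using iso one_O_in_Ohol unfolding obj_iso_def by blast
  note T = O_linear_bij_eq_Omult[OF bij O_linear]
  have "Omult (\<Phi> one_O) (T one_O) = twisted_shift q (\<Psi> one_O) (T one_O)"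
    using intertwines T(2)[OF Ounits_Ohol[OF rank1_obj_eq_twisted_shift(1)[OF q \<Phi>]]]
      rank1_obj_eq_twisted_shift(2)[OF q \<Psi> Ounits_Ohol[OF T(1)]] by simp
  thus ?thesis
    using T(1) unfolding gauge_equiv_def
    by (intro bexI[of _ "T one_O"]) (auto simp: Omult_def twisted_shift_def fun_eq_iff mult.commute)
qed

lemma gauge_equiv_imp_obj_iso:
  assumes q: "q \<noteq> 0" and \<Phi>: "rank1_obj q \<Phi>" and \<Psi>: "rank1_obj q \<Psi>"
    and equiv: "gauge_equiv q (\<Phi> one_O) (\<Psi> one_O)"
  shows "obj_iso \<Phi> \<Psi>"
proof -
  obtain b where b: "b \<in> Ounits" and gauge: "\<And>z. \<Psi> one_O z * b (q * z) = \<Phi> one_O z * b z"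
    using equiv by (auto simp: gauge_equiv_def)
  have "Omult (\<Phi> f) b = \<Psi> (Omult f b)" if f: "f \<in> Ohol" for f
  proof -
    have "Omult (\<Phi> f) b = (\<lambda>z. f (q * z) * b (q * z) * \<Psi> one_O z)"
      using gauge by (simp add: rank1_obj_eq_twisted_shift(2)[OF q \<Phi> f] twisted_shift_def
          Omult_def fun_eq_iff mult_ac)
    also have "\<dots> = \<Psi> (Omult f b)"
      using rank1_obj_eq_twisted_shift(2)[OF q \<Psi> Ohol_mult[OF f Ounits_Ohol[OF b]]]
      by (simp add: twisted_shift_def Omult_def)
    finally show ?thesis .
  qed
  thus ?thesis
    unfolding obj_iso_def using bij_betw_Omult_unit[OF b]
    by (intro exI[of _ "\<lambda>g. Omult g b"]) (auto simp: Omult_def algebra_simps)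
qed

lemma gauge_equiv_refl: "q \<noteq> 0 \<Longrightarrow> gauge_equiv q a a"
  unfolding gauge_equiv_def by (intro bexI[of _ one_O] one_O_in_Ounits) (simp add: one_O_def)

lemma gauge_equiv_sym:
  assumes q: "q \<noteq> 0" and a: "a \<in> Ohol" and a': "a' \<in> Ohol" and equiv: "gauge_equiv q a a'"
  shows "gauge_equiv q a' a"
proof -
  obtain b where b: "b \<in> Ounits" and gauge: "\<And>z. a' z * b (q * z) = a z * b z"
    using equiv by (auto simp: gauge_equiv_def)
  have "a z * Oinv b (q * z) = a' z * Oinv b z" for z
  proof (cases "z = 0")
    case False
    hence "b z \<noteq> 0" "b (q * z) \<noteq> 0" using q b by (auto simp: Ounits_nonzero)
    thus ?thesis using gauge[of z] False q by (simp add: Oinv_def field_simps)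
  qed (simp add: a a' Ohol_zero_at_0)
  thus ?thesis using Oinv_in_Ounits[OF b] by (auto simp: gauge_equiv_def)
qed

lemma gauge_equiv_Omult:
  assumes "gauge_equiv q a a'" and "gauge_equiv q c c'"
  shows "gauge_equiv q (Omult a c) (Omult a' c')"
proof -
  obtain b1 where "b1 \<in> Ounits" "\<And>z. a' z * b1 (q * z) = a z * b1 z"
    using assms(1) by (auto simp: gauge_equiv_def)
  moreover obtain b2 where "b2 \<in> Ounits" "\<And>z. c' z * b2 (q * z) = c z * b2 z"
    using assms(2) by (auto simp: gauge_equiv_def)
  ultimately show ?thesis
    unfolding gauge_equiv_def
    by (intro bexI[of _ "Omult b1 b2"] allI Omult_in_Ounits)
       (auto simp: Omult_def, metis mult.assoc mult.left_commute)
qed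

lemma gauge_equiv_trans:
  assumes "gauge_equiv q a a'" and "gauge_equiv q a' a''"
  shows "gauge_equiv q a a''"
proof -
  obtain b1 where "b1 \<in> Ounits" "\<And>z. a' z * b1 (q * z) = a z * b1 z"
    using assms(1) by (auto simp: gauge_equiv_def)
  moreover obtain b2 where "b2 \<in> Ounits" "\<And>z. a'' z * b2 (q * z) = a' z * b2 z"
    using assms(2) by (auto simp: gauge_equiv_def)
  ultimately show ?thesis
    unfolding gauge_equiv_def
    by (intro bexI[of _ "Omult b1 b2"] allI Omult_in_Ounits)
       (auto simp: Omult_def, metis mult.assoc mult.left_commute)
qed

section \<open>The Picard group\<close>

definition twisted_class ::
    "complex \<Rightarrow> (complex \<Rightarrow> complex) \<Rightarrow> ((complex \<Rightarrow> complex) \<Rightarrow> (complex \<Rightarrow> complex)) set" where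
  "twisted_class q a = pic_class q (twisted_shift q a)"

lemma pic_class_eq:
  assumes q: "q \<noteq> 0" and \<Phi>: "rank1_obj q \<Phi>"
  shows "pic_class q \<Phi> = {\<Psi>. rank1_obj q \<Psi> \<and> gauge_equiv q (\<Phi> one_O) (\<Psi> one_O)}"
  unfolding pic_class_def using obj_iso_imp_gauge_equiv[OF q \<Phi>] gauge_equiv_imp_obj_iso[OF q \<Phi>]
  by blast

lemma twisted_class_eq:
  assumes q: "q \<noteq> 0" and a: "a \<in> Ounits"
  shows "twisted_class q a = {\<Psi>. rank1_obj q \<Psi> \<and> gauge_equiv q a (\<Psi> one_O)}"
  using pic_class_eq[OF q rank1_obj_twisted_shift[OF q a]] twisted_shift_one_O[OF q Ounits_Ohol[OF a]]
  by (simp add: twisted_class_def)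

lemma pic_class_eq_twisted_class:
  assumes q: "q \<noteq> 0" and \<Phi>: "rank1_obj q \<Phi>"
  shows "pic_class q \<Phi> = twisted_class q (\<Phi> one_O)"
  using pic_class_eq[OF q \<Phi>] twisted_class_eq[OF q rank1_obj_eq_twisted_shift(1)[OF q \<Phi>]] by simp

lemma twisted_shift_in_twisted_class:
  "q \<noteq> 0 \<Longrightarrow> a \<in> Ounits \<Longrightarrow> twisted_shift q a \<in> twisted_class q a"
  using twisted_class_eq rank1_obj_twisted_shift twisted_shift_one_O gauge_equiv_refl
  by (simp add: Ounits_Ohol)

lemma twisted_class_memberD:
  assumes q: "q \<noteq> 0" and a: "a \<in> Ounits" and \<Psi>: "\<Psi> \<in> twisted_class q a"
  shows "rank1_obj q \<Psi>" "\<Psi> one_O \<in> Ounits" "gauge_equiv q a (\<Psi> one_O)"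
  using \<Psi> twisted_class_eq[OF q a] rank1_obj_eq_twisted_shift(1)[OF q] by auto

lemma twisted_class_eq_iff:
  assumes q: "q \<noteq> 0" and a: "a \<in> Ounits" and a': "a' \<in> Ounits"
  shows "twisted_class q a = twisted_class q a' \<longleftrightarrow> gauge_equiv q a a'"
proof
  assume "twisted_class q a = twisted_class q a'"
  thus "gauge_equiv q a a'"
    using twisted_shift_in_twisted_class[OF q a'] twisted_class_memberD(3)[OF q a]
      twisted_shift_one_O[OF q Ounits_Ohol[OF a']] by metis
next
  assume "gauge_equiv q a a'"
  moreover from this have "gauge_equiv q a' a"
    using gauge_equiv_sym q a a' Ounits_Ohol by blast
  ultimately show "twisted_class q a = twisted_class q a'"
    unfolding twisted_class_eq[OF q a] twisted_class_eq[OF q a'] using gauge_equiv_trans by blast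
qed

lemma some_in_twisted_class:
  assumes "q \<noteq> 0" and "a \<in> Ounits"
  shows "(SOME \<Phi>. \<Phi> \<in> twisted_class q a) \<in> twisted_class q a"
  using twisted_shift_in_twisted_class[OF assms]
  by (rule someI[where P = "\<lambda>\<Phi>. \<Phi> \<in> twisted_class q a"])

lemma carrier_Pic_Bq: "q \<noteq> 0 \<Longrightarrow> carrier (Pic_Bq q) = twisted_class q ` Ounits"
  unfolding Pic_Bq_def twisted_class_def
  using pic_class_eq_twisted_class rank1_obj_twisted_shift rank1_obj_eq_twisted_shift(1)
  by (auto simp: twisted_class_def)

lemma mult_Pic_Bq_twisted_class:
  assumes q: "q \<noteq> 0" and a: "a \<in> Ounits" and c: "c \<in> Ounits"
  shows "twisted_class q a \<otimes>\<^bsub>Pic_Bq q\<^esub> twisted_class q c = twisted_class q (Omult a c)"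
proof -
  define \<Phi> where "\<Phi> = (SOME \<Phi>. \<Phi> \<in> twisted_class q a)"
  define \<Psi> where "\<Psi> = (SOME \<Psi>. \<Psi> \<in> twisted_class q c)"
  note \<Phi>_mem = twisted_class_memberD[OF q a some_in_twisted_class[OF q a], folded \<Phi>_def]
  note \<Psi>_mem = twisted_class_memberD[OF q c some_in_twisted_class[OF q c], folded \<Psi>_def]
  define u where "u = Omult (\<Phi> one_O) (\<Psi> one_O)"
  have u: "u \<in> Ounits" unfolding u_def by (rule Omult_in_Ounits[OF \<Phi>_mem(2) \<Psi>_mem(2)])
  have tensor: "obj_tensor \<Phi> \<Psi> f = twisted_shift q u f" if "f \<in> Ohol" for f
    using rank1_obj_eq_twisted_shift(2)[OF q \<Phi>_mem(1) that] that
    by (simp add: obj_tensor_def twisted_shift_def u_def Omult_def mult_ac)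
  have "pic_class q (obj_tensor \<Phi> \<Psi>) = twisted_class q u"
    using pic_class_eq_twisted_class[OF q rank1_obj_if_eq_twisted_shift[OF q u tensor]]
      tensor[OF one_O_in_Ohol] twisted_shift_one_O[OF q Ounits_Ohol[OF u]] by simp
  also have "\<dots> = twisted_class q (Omult a c)"
    using twisted_class_eq_iff[OF q Omult_in_Ounits[OF a c] u] gauge_equiv_Omult[OF \<Phi>_mem(3) \<Psi>_mem(3)]
    by (simp add: u_def)
  finally show ?thesis by (simp add: Pic_Bq_def \<Phi>_def \<Psi>_def)
qed

lemma one_Pic_Bq:
  assumes q: "q \<noteq> 0"
  shows "\<one>\<^bsub>Pic_Bq q\<^esub> = twisted_class q one_O"
proof -
  have "rank1_obj q (qshift q)"
    by (rule rank1_obj_if_eq_twisted_shift[OF q one_O_in_Ounits])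
       (auto simp: twisted_shift_def qshift_def one_O_def Ohol_zero_at_0)
  thus ?thesis
    using pic_class_eq_twisted_class[OF q] qshift_one_O[OF q] by (simp add: Pic_Bq_def)
qed

lemma group_Pic_Bq:
  assumes q: "q \<noteq> 0"
  shows "group (Pic_Bq q)"
proof (rule groupI)
  note carrier = carrier_Pic_Bq[OF q] and mult = mult_Pic_Bq_twisted_class[OF q]
  show "\<one>\<^bsub>Pic_Bq q\<^esub> \<in> carrier (Pic_Bq q)"
    using one_Pic_Bq[OF q] one_O_in_Ounits carrier by auto
  fix x y z
  assume "x \<in> carrier (Pic_Bq q)" "y \<in> carrier (Pic_Bq q)" "z \<in> carrier (Pic_Bq q)"
  then obtain a b c where abc: "a \<in> Ounits" "b \<in> Ounits" "c \<in> Ounits"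
    and xyz: "x = twisted_class q a" "y = twisted_class q b" "z = twisted_class q c"
    using carrier by auto
  show "x \<otimes>\<^bsub>Pic_Bq q\<^esub> y \<in> carrier (Pic_Bq q)"
    using abc xyz mult carrier Omult_in_Ounits by auto
  show "x \<otimes>\<^bsub>Pic_Bq q\<^esub> y \<otimes>\<^bsub>Pic_Bq q\<^esub> z = x \<otimes>\<^bsub>Pic_Bq q\<^esub> (y \<otimes>\<^bsub>Pic_Bq q\<^esub> z)"
    using abc xyz by (simp add: mult Omult_in_Ounits Omult_assoc)
next
  note carrier = carrier_Pic_Bq[OF q] and mult = mult_Pic_Bq_twisted_class[OF q]
  fix x assume "x \<in> carrier (Pic_Bq q)"
  then obtain a where a: "a \<in> Ounits" "x = twisted_class q a" using carrier by auto
  show "\<one>\<^bsub>Pic_Bq q\<^esub> \<otimes>\<^bsub>Pic_Bq q\<^esub> x = x"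
    using a one_Pic_Bq[OF q] mult[OF one_O_in_Ounits a(1)] Omult_one_O[OF Ounits_Ohol] by simp
  have "twisted_class q (Oinv a) \<otimes>\<^bsub>Pic_Bq q\<^esub> x = \<one>\<^bsub>Pic_Bq q\<^esub>"
    using a one_Pic_Bq[OF q] mult[OF Oinv_in_Ounits a(1)] Omult_Oinv by simp
  thus "\<exists>y\<in>carrier (Pic_Bq q). y \<otimes>\<^bsub>Pic_Bq q\<^esub> x = \<one>\<^bsub>Pic_Bq q\<^esub>"
    using carrier Oinv_in_Ounits[OF a(1)] by auto
qed

section \<open>The degree and the extension\<close>

definition unit_degree :: "(complex \<Rightarrow> complex) \<Rightarrow> int" where
  "unit_degree a =
     (THE m. \<exists>h. h holomorphic_on - {0} \<and> (\<forall>z. z \<noteq> 0 \<longrightarrow> a z = z powi m * exp (h z)))"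

lemma unit_degree_eqI:
  assumes h: "h holomorphic_on - {0}" and a: "\<And>z. z \<noteq> 0 \<Longrightarrow> a z = z powi m * exp (h z)"
  shows "unit_degree a = m"
  unfolding unit_degree_def
proof (rule the_equality)
  show "\<exists>h. h holomorphic_on - {0} \<and> (\<forall>z. z \<noteq> 0 \<longrightarrow> a z = z powi m * exp (h z))"
    using h a by blast
  fix m' assume "\<exists>h. h holomorphic_on - {0} \<and> (\<forall>z. z \<noteq> 0 \<longrightarrow> a z = z powi m' * exp (h z))"
  then obtain h' where h': "h' holomorphic_on - {0}" "\<And>z. z \<noteq> 0 \<Longrightarrow> a z = z powi m' * exp (h' z)"
    by blast
  have "z powi (m' - m) = exp (h z - h' z)" if z: "z \<noteq> 0" for z
    using a[OF z] h'(2)[OF z] z by (simp add: power_int_diff exp_diff field_simps)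
  hence "m' - m = 0"
    by (intro powi_eq_exp_holomorphic_imp_zero[of "\<lambda>z. h z - h' z"])
       (use h h'(1) in \<open>auto intro: holomorphic_intros\<close>)
  thus "m' = m" by simp
qed

lemma unit_degree_repr:
  assumes a: "a \<in> Ounits"
  obtains h where "h holomorphic_on - {0}"
    "\<And>z. z \<noteq> 0 \<Longrightarrow> a z = z powi (unit_degree a) * exp (h z)"
proof -
  obtain m h where "h holomorphic_on - {0}" "\<And>z. z \<noteq> 0 \<Longrightarrow> a z = z powi m * exp (h z)"
    using nonvanishing_holomorphic_punctured_eq_powi_exp[OF Ounits_holomorphic[OF a]
        Ounits_nonzero[OF a]] by metis
  moreover from unit_degree_eqI[OF this] have "unit_degree a = m" .
  ultimately show ?thesis using that by blast
qed

lemma unit_degree_Omult: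
  assumes a: "a \<in> Ounits" and c: "c \<in> Ounits"
  shows "unit_degree (Omult a c) = unit_degree a + unit_degree c"
proof -
  obtain h where h: "h holomorphic_on - {0}"
    "\<And>z. z \<noteq> 0 \<Longrightarrow> a z = z powi (unit_degree a) * exp (h z)"
    using unit_degree_repr[OF a] by blast
  obtain g where g: "g holomorphic_on - {0}"
    "\<And>z. z \<noteq> 0 \<Longrightarrow> c z = z powi (unit_degree c) * exp (g z)"
    using unit_degree_repr[OF c] by blast
  show ?thesis
  proof (rule unit_degree_eqI[of "\<lambda>z. h z + g z"])
    show "(\<lambda>z. h z + g z) holomorphic_on - {0}" by (intro holomorphic_intros h g)
    fix z :: complex assume "z \<noteq> 0"
    thus "Omult a c z = z powi (unit_degree a + unit_degree c) * exp (h z + g z)"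
      using h(2) g(2) by (simp add: Omult_def power_int_add exp_add mult_ac)
  qed
qed

lemma unit_degree_gauge_equiv:
  assumes q: "q \<noteq> 0" and a: "a \<in> Ounits" and equiv: "gauge_equiv q a a'"
  shows "unit_degree a' = unit_degree a"
proof -
  obtain b where b: "b \<in> Ounits" and gauge: "\<And>z. a' z * b (q * z) = a z * b z"
    using equiv by (auto simp: gauge_equiv_def)
  obtain h where h: "h holomorphic_on - {0}"
    "\<And>z. z \<noteq> 0 \<Longrightarrow> a z = z powi (unit_degree a) * exp (h z)"
    using unit_degree_repr[OF a] by blast
  obtain g where g: "g holomorphic_on - {0}"
    "\<And>z. z \<noteq> 0 \<Longrightarrow> b z = z powi (unit_degree b) * exp (g z)"
    using unit_degree_repr[OF b] by blast
  define k where "k = unit_degree b"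
  show ?thesis
  proof (rule unit_degree_eqI[of "\<lambda>z. h z + g z - g (q * z) - of_int k * Ln q"])
    show "(\<lambda>z. h z + g z - g (q * z) - of_int k * Ln q) holomorphic_on - {0}"
      by (intro holomorphic_intros h g holomorphic_on_punctured_rescale[OF q g(1)])
    fix z :: complex assume z: "z \<noteq> 0"
    have "a' z * (q powi k * z powi k * exp (g (q * z)))
        = z powi (unit_degree a) * exp (h z) * (z powi k * exp (g z))"
      using gauge[of z] h(2)[OF z] g(2)[OF z] g(2)[of "q * z"] q z
      by (simp add: k_def power_int_mult_distrib)
    moreover have "q powi k = exp (of_int k * Ln q)" using q by (simp add: exp_power_int[symmetric])
    ultimately show "a' z = z powi (unit_degree a) * exp (h z + g z - g (q * z) - of_int k * Ln q)"
      using q z by (simp add: exp_diff exp_add field_simps)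
  qed
qed

definition const_O :: "complex \<Rightarrow> complex \<Rightarrow> complex" where
  "const_O w = (\<lambda>z. if z = 0 then 0 else w)"

definition powi_O :: "int \<Rightarrow> complex \<Rightarrow> complex" where
  "powi_O m = (\<lambda>z. if z = 0 then 0 else z powi m)"

lemma const_O_in_Ounits: "w \<noteq> 0 \<Longrightarrow> const_O w \<in> Ounits"
  using Ohol_restrict[of "\<lambda>_. w"] by (auto simp: Ounits_def const_O_def)

lemma powi_O_in_Ounits: "powi_O m \<in> Ounits"
proof -
  have "(\<lambda>z. z powi m) holomorphic_on - {0}" by (intro holomorphic_intros) auto
  thus ?thesis using Ohol_restrict by (auto simp: Ounits_def powi_O_def)
qed

lemma unit_degree_const_O: "w \<noteq> 0 \<Longrightarrow> unit_degree (const_O w) = 0"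
  by (rule unit_degree_eqI[of "\<lambda>_. Ln w"]) (auto simp: const_O_def)

lemma unit_degree_powi_O: "unit_degree (powi_O m) = m"
  by (rule unit_degree_eqI[of "\<lambda>_. 0"]) (auto simp: powi_O_def)

lemma Omult_const_O: "Omult (const_O w) (const_O w') = const_O (w * w')"
  by (auto simp: Omult_def const_O_def)

lemma qorbit_eq_iff:
  assumes q: "q \<noteq> 0"
  shows "qorbit q w = qorbit q w' \<longleftrightarrow> (\<exists>n. w' = w * q powi n)"
proof
  assume "qorbit q w = qorbit q w'"
  hence "w' \<in> qorbit q w" unfolding qorbit_def by (metis (mono_tags) mem_Collect_eq mult_1_right power_int_0_right)
  thus "\<exists>n. w' = w * q powi n" by (auto simp: qorbit_def)
next
  assume "\<exists>n. w' = w * q powi n"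
  then obtain n where n: "w' = w * q powi n" by blast
  have "w' * q powi m = w * q powi (n + m)" "w * q powi m = w' * q powi (m - n)" for m
    using q by (simp_all add: n power_int_add power_int_diff mult.assoc)
  thus "qorbit q w = qorbit q w'" unfolding qorbit_def by (metis (no_types, opaque_lifting))
qed

lemma qorbit_mult:
  assumes q: "q \<noteq> 0"
  shows "{a * b |a b. a \<in> qorbit q w \<and> b \<in> qorbit q w'} = qorbit q (w * w')"
proof -
  have "w * q powi n * (w' * q powi m) = w * w' * q powi (n + m)" for n m
    using q by (simp add: power_int_add mult_ac)
  moreover have "w * w' * q powi n = (w * q powi n) * (w' * q powi 0)" for n
    by (simp add: mult_ac)
  ultimately show ?thesis unfolding qorbit_def by blast
qed

lemma gauge_equiv_const_O_if_same_qorbit: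
  assumes q: "q \<noteq> 0" and orbit: "qorbit q w = qorbit q w'"
  shows "gauge_equiv q (const_O w) (const_O w')"
proof -
  obtain n where n: "w' = w * q powi n" using orbit qorbit_eq_iff[OF q] by blast
  have "const_O w' z * powi_O (- n) (q * z) = const_O w z * powi_O (- n) z" for z
    using q by (cases "z = 0") (auto simp: n const_O_def powi_O_def power_int_mult_distrib
        power_int_minus field_simps)
  thus ?thesis unfolding gauge_equiv_def using powi_O_in_Ounits by blast
qed

lemma same_qorbit_if_gauge_equiv_const_O:
  assumes q: "norm q = 1" and w: "w \<noteq> 0" and equiv: "gauge_equiv q (const_O w) (const_O w')"
  shows "qorbit q w = qorbit q w'"
proof -
  have q0: "q \<noteq> 0" using q by auto
  obtain b where b: "b \<in> Ounits" and gauge: "\<And>z. const_O w' z * b (q * z) = const_O w z * b z"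
    using equiv by (auto simp: gauge_equiv_def)
  obtain g where g: "g holomorphic_on - {0}"
    "\<And>z. z \<noteq> 0 \<Longrightarrow> b z = z powi (unit_degree b) * exp (g z)"
    using unit_degree_repr[OF b] by blast
  define k where "k = unit_degree b"
  have "exp (g z - g (q * z)) = w' * q powi k / w" if z: "z \<noteq> 0" for z
  proof -
    have "w' * (q powi k * z powi k * exp (g (q * z))) = w * (z powi k * exp (g z))"
      using gauge[of z] g(2)[OF z] g(2)[of "q * z"] z q0
      by (simp add: const_O_def k_def power_int_mult_distrib)
    thus ?thesis using z w q0 by (simp add: exp_diff field_simps)
  qed
  hence "w' * q powi k / w = 1" by (rule exp_q_difference_constant_eq_1[OF g(1) q])
  hence "w = w' * q powi k" using w by (simp add: field_simps)
  thus ?thesis using qorbit_eq_iff[OF q0, of w' w] by auto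
qed

lemma unit_degree_zero_imp_gauge_equiv_const_O:
  fixes q :: complex
  assumes q: "q \<noteq> 0" and C: "C > 0" and r: "r > 0"
    and small_div: "\<And>n. n > 0 \<Longrightarrow> C * r ^ n \<le> norm (q ^ n - 1)"
    and a: "a \<in> Ounits" and deg: "unit_degree a = 0"
  obtains w where "w \<noteq> 0" "gauge_equiv q a (const_O w)"
proof -
  obtain h where h: "h holomorphic_on - {0}" "\<And>z. z \<noteq> 0 \<Longrightarrow> a z = exp (h z)"
    using unit_degree_repr[OF a] deg by auto
  obtain c g where g: "g holomorphic_on - {0}" "\<And>z. z \<noteq> 0 \<Longrightarrow> g (q * z) - g z = h z - c"
    using punctured_q_difference_equation_solvable[OF h(1) q C r small_div] by blast
  define b where "b = (\<lambda>z. if z = 0 then 0 else exp (g z))"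
  have "b \<in> Ounits"
    using Ohol_restrict[of "\<lambda>z. exp (g z)"] g(1) by (auto intro: holomorphic_intros simp: Ounits_def b_def)
  moreover have "const_O (exp c) z * b (q * z) = a z * b z" for z
  proof (cases "z = 0")
    case False
    hence "c + g (q * z) = h z + g z" using g(2)[OF False] by (simp add: algebra_simps)
    hence "exp c * exp (g (q * z)) = exp (h z) * exp (g z)" by (metis exp_add)
    thus ?thesis using False q h(2) by (simp add: const_O_def b_def)
  qed (simp add: b_def const_O_def Ounits_Ohol[OF a] Ohol_zero_at_0)
  ultimately show ?thesis using that[of "exp c"] by (auto simp: gauge_equiv_def)
qed

definition qorbit_class ::
    "complex \<Rightarrow> complex set \<Rightarrow> ((complex \<Rightarrow> complex) \<Rightarrow> (complex \<Rightarrow> complex)) set" where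
  "qorbit_class q A = twisted_class q (const_O (SOME w. w \<in> A))"

definition pic_degree :: "((complex \<Rightarrow> complex) \<Rightarrow> (complex \<Rightarrow> complex)) set \<Rightarrow> int" where
  "pic_degree A = unit_degree ((SOME \<Phi>. \<Phi> \<in> A) one_O)"

lemma qorbit_class_qorbit:
  assumes q: "q \<noteq> 0" and w: "w \<noteq> 0"
  shows "qorbit_class q (qorbit q w) = twisted_class q (const_O w)"
proof -
  have "w \<in> qorbit q w" unfolding qorbit_def by (metis (mono_tags) mem_Collect_eq mult_1_right power_int_0_right)
  hence "(SOME x. x \<in> qorbit q w) \<in> qorbit q w" by (rule someI)
  then obtain n where n: "(SOME x. x \<in> qorbit q w) = w * q powi n" by (auto simp: qorbit_def)
  hence "qorbit q w = qorbit q (SOME x. x \<in> qorbit q w)" using qorbit_eq_iff[OF q] by blast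
  moreover have "(SOME x. x \<in> qorbit q w) \<noteq> 0" using n q w by simp
  ultimately show ?thesis
    unfolding qorbit_class_def using twisted_class_eq_iff[OF q] const_O_in_Ounits w
      gauge_equiv_const_O_if_same_qorbit[OF q] gauge_equiv_sym[OF q] Ounits_Ohol by metis
qed

lemma pic_degree_twisted_class:
  assumes q: "q \<noteq> 0" and a: "a \<in> Ounits"
  shows "pic_degree (twisted_class q a) = unit_degree a"
  unfolding pic_degree_def
  by (rule unit_degree_gauge_equiv[OF q a twisted_class_memberD(3)[OF q a some_in_twisted_class[OF q a]]])

lemma carrier_Cstar_mod_q: "carrier (Cstar_mod_q q) = {qorbit q w | w. w \<noteq> 0}"
  by (simp add: Cstar_mod_q_def)

lemma qorbit_class_hom:
  assumes q: "q \<noteq> 0"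
  shows "qorbit_class q \<in> hom (Cstar_mod_q q) (Pic_Bq q)"
proof (rule homI)
  fix x assume "x \<in> carrier (Cstar_mod_q q)"
  then obtain w where "w \<noteq> 0" "x = qorbit q w" by (auto simp: carrier_Cstar_mod_q)
  thus "qorbit_class q x \<in> carrier (Pic_Bq q)"
    using qorbit_class_qorbit[OF q] const_O_in_Ounits carrier_Pic_Bq[OF q] by auto
next
  fix x y assume "x \<in> carrier (Cstar_mod_q q)" "y \<in> carrier (Cstar_mod_q q)"
  then obtain w w' where w: "w \<noteq> 0" "x = qorbit q w" and w': "w' \<noteq> 0" "y = qorbit q w'"
    by (auto simp: carrier_Cstar_mod_q)
  have "x \<otimes>\<^bsub>Cstar_mod_q q\<^esub> y = qorbit q (w * w')"
    using w w' qorbit_mult[OF q] by (simp add: Cstar_mod_q_def)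
  thus "qorbit_class q (x \<otimes>\<^bsub>Cstar_mod_q q\<^esub> y) = qorbit_class q x \<otimes>\<^bsub>Pic_Bq q\<^esub> qorbit_class q y"
    using w w' by (simp add: qorbit_class_qorbit[OF q] mult_Pic_Bq_twisted_class[OF q]
        const_O_in_Ounits Omult_const_O)
qed

lemma pic_degree_hom:
  assumes q: "q \<noteq> 0"
  shows "pic_degree \<in> hom (Pic_Bq q) integer_group"
proof (rule homI)
  fix x y assume "x \<in> carrier (Pic_Bq q)" "y \<in> carrier (Pic_Bq q)"
  then obtain a c where "a \<in> Ounits" "x = twisted_class q a" "c \<in> Ounits" "y = twisted_class q c"
    by (auto simp: carrier_Pic_Bq[OF q])
  thus "pic_degree (x \<otimes>\<^bsub>Pic_Bq q\<^esub> y) = pic_degree x \<otimes>\<^bsub>integer_group\<^esub> pic_degree y"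
    by (simp add: mult_Pic_Bq_twisted_class[OF q] pic_degree_twisted_class[OF q]
        Omult_in_Ounits unit_degree_Omult)
qed simp

lemma inj_on_qorbit_class:
  assumes q: "norm q = 1"
  shows "inj_on (qorbit_class q) (carrier (Cstar_mod_q q))"
proof (rule inj_onI)
  have q0: "q \<noteq> 0" using q by auto
  fix x y assume "x \<in> carrier (Cstar_mod_q q)" "y \<in> carrier (Cstar_mod_q q)"
    and "qorbit_class q x = qorbit_class q y"
  then obtain w w' where w: "w \<noteq> 0" "x = qorbit q w" and w': "w' \<noteq> 0" "y = qorbit q w'"
    and "twisted_class q (const_O w) = twisted_class q (const_O w')"
    by (auto simp: carrier_Cstar_mod_q qorbit_class_qorbit[OF q0])
  hence "gauge_equiv q (const_O w) (const_O w')"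
    using twisted_class_eq_iff[OF q0] const_O_in_Ounits by blast
  thus "x = y" using same_qorbit_if_gauge_equiv_const_O[OF q w(1)] w w' by simp
qed

lemma pic_degree_surj:
  assumes q: "q \<noteq> 0"
  shows "pic_degree ` carrier (Pic_Bq q) = carrier integer_group"
proof -
  have "m = pic_degree (twisted_class q (powi_O m))" for m
    by (simp add: pic_degree_twisted_class[OF q powi_O_in_Ounits] unit_degree_powi_O)
  hence "m \<in> pic_degree ` carrier (Pic_Bq q)" for m
    using carrier_Pic_Bq[OF q] powi_O_in_Ounits by blast
  thus ?thesis by auto
qed

lemma image_qorbit_class_eq_kernel:
  fixes q :: complex
  assumes q: "q \<noteq> 0" and C: "C > 0" and r: "r > 0"
    and small_div: "\<And>n. n > 0 \<Longrightarrow> C * r ^ n \<le> norm (q ^ n - 1)"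
  shows "qorbit_class q ` carrier (Cstar_mod_q q) = kernel (Pic_Bq q) integer_group pic_degree"
proof (intro equalityI subsetI)
  fix x assume "x \<in> qorbit_class q ` carrier (Cstar_mod_q q)"
  then obtain w where "w \<noteq> 0" "x = twisted_class q (const_O w)"
    by (auto simp: carrier_Cstar_mod_q qorbit_class_qorbit[OF q])
  thus "x \<in> kernel (Pic_Bq q) integer_group pic_degree"
    by (auto simp: kernel_def carrier_Pic_Bq[OF q] const_O_in_Ounits
        pic_degree_twisted_class[OF q] unit_degree_const_O)
next
  fix x assume "x \<in> kernel (Pic_Bq q) integer_group pic_degree"
  then obtain a where a: "a \<in> Ounits" "x = twisted_class q a" and "unit_degree a = 0"
    by (auto simp: kernel_def carrier_Pic_Bq[OF q] pic_degree_twisted_class[OF q])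
  then obtain w where w: "w \<noteq> 0" "gauge_equiv q a (const_O w)"
    using unit_degree_zero_imp_gauge_equiv_const_O[OF q C r small_div] by blast
  hence "x = qorbit_class q (qorbit q w)"
    using a twisted_class_eq_iff[OF q] const_O_in_Ounits qorbit_class_qorbit[OF q] by simp
  thus "x \<in> qorbit_class q ` carrier (Cstar_mod_q q)"
    using w(1) by (auto simp: carrier_Cstar_mod_q)
qed

theorem proposition4:
  fixes q :: complex
  assumes "cmod q = 1"
    and "\<forall>n::nat. n > 0 \<longrightarrow> q ^ n \<noteq> 1"
    and "\<exists>C L. C > 0 \<and> L > 0 \<and>
           (\<forall>n::int. n \<noteq> 0 \<longrightarrow> cmod (q powi n - 1) \<ge> C * \<bar>real_of_int n\<bar> powr (- L))"
  shows "group (Pic_Bq q) \<and>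
    (\<exists>i p. i \<in> hom (Cstar_mod_q q) (Pic_Bq q) \<and> p \<in> hom (Pic_Bq q) integer_group
       \<and> inj_on i (carrier (Cstar_mod_q q))
       \<and> p ` carrier (Pic_Bq q) = carrier integer_group
       \<and> i ` carrier (Cstar_mod_q q) = kernel (Pic_Bq q) integer_group p)"
proof -
  have q: "q \<noteq> 0" using assms(1) by auto
  obtain C L where C: "C > 0" and L: "L > 0"
    and dio: "\<forall>n::int. n \<noteq> 0 \<longrightarrow> cmod (q powi n - 1) \<ge> C * \<bar>real_of_int n\<bar> powr (- L)"
    using assms(3) by blast
  have "qorbit_class q ` carrier (Cstar_mod_q q) = kernel (Pic_Bq q) integer_group pic_degree"
    using image_qorbit_class_eq_kernel[OF q C exp_gt_zero
        diophantine_imp_geometric_lower_bound[OF L dio C]] .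
  thus ?thesis
    using group_Pic_Bq[OF q] qorbit_class_hom[OF q] pic_degree_hom[OF q]
      inj_on_qorbit_class[OF assms(1)] pic_degree_surj[OF q] by blast
qed

end
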